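(* Let $G$ be a group acting on a set $X$ and $Y$ a finite subset of $X$ such that $\mu=\inf_{A\in\mathcal{P}_{\mathrm{fin}}(G)\setminus\{\emptyset\}}\frac{|A\cdot Y|}{|A|}>0$. Then for any $\lambda\in\,]0,\mu]$ and any nonempty finite subset $A_0$ of $G$ there exists a subgroup $H$ of $G$ containing $G_Y$ such that \[\lambda\max_{A\subset G,\ A\cdot Y=A_0\cdot Y}|A|+|Y|\leq\lambda|H|+|A_0\cdot Y|.\]
   Context: $\mathcal{P}_{\mathrm{fin}}(G)$ is the set of finite subsets of $G$; $A\cdot Y=\{a\cdot y\mid a\in A,y\in Y\}$; $G_Y=\{g\in G\mid g\cdot Y=Y\}$. *)

theory Defs
  imports "HOL-Algebra.Group_Action" Complex_Main
begin

definition set_act :: "('g \<Rightarrow> 'x \<Rightarrow> 'x) \<Rightarrow> 'g set \<Rightarrow> 'x set \<Rightarrow> 'x set" where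
  "set_act \<phi> A Y = {\<phi> a y | a y. a \<in> A \<and> y \<in> Y}"

definition set_stab :: "('g, 'c) monoid_scheme \<Rightarrow> ('g \<Rightarrow> 'x \<Rightarrow> 'x) \<Rightarrow> 'x set \<Rightarrow> 'g set" where
  "set_stab G \<phi> Y = {g \<in> carrier G. set_act \<phi> {g} Y = Y}"

definition expansion_inf :: "('g, 'c) monoid_scheme \<Rightarrow> ('g \<Rightarrow> 'x \<Rightarrow> 'x) \<Rightarrow> 'x set \<Rightarrow> real" where
  "expansion_inf G \<phi> Y = Inf {real (card (set_act \<phi> A Y)) / real (card A) | A.
       A \<subseteq> carrier G \<and> finite A \<and> A \<noteq> {}}"

end

(*
  For 0 < lam < mu consider the defect f(A) = |A.Y| - lam |A| of the nonempty finite subsets A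
  of G. Since f(A) >= (mu - lam) |A|, only sets of bounded size compete for the minimum, so f
  attains it; pick a minimiser H of least cardinality, translated so that it contains 1. The
  defect is invariant under left translation and submodular, so for g in H the intersection of
  H and gH (which contains g) is again a minimiser, and by the choice of H it is all of H. Hence
  gH = H for all g in H, i.e. H is a subgroup. It contains G_Y, because adding a stabilising
  element outside H to H leaves H.Y (which contains Y) unchanged and would lower the defect.
  Finally f(H) <= f(A) and |H.Y| >= |Y| give lam |A| + |Y| <= lam |H| + |A.Y|, which is applied
  to the largest A with A.Y = A0.Y; it is finite because |A.Y| >= mu |A|.
*)
theory Submission
  imports Defs
begin

definition nonempty_fin_subsets :: "'a set \<Rightarrow> 'a set set" where
  "nonempty_fin_subsets S = {A. A \<subseteq> S \<and> finite A \<and> A \<noteq> {}}"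

lemma nonempty_fin_subsets_iff [simp]:
  "A \<in> nonempty_fin_subsets S \<longleftrightarrow> A \<subseteq> S \<and> finite A \<and> A \<noteq> {}"
  by (simp add: nonempty_fin_subsets_def)

lemma set_act_mono: "A \<subseteq> B \<Longrightarrow> set_act \<phi> A Y \<subseteq> set_act \<phi> B Y"
  unfolding set_act_def by blast

lemma set_act_Un: "set_act \<phi> (A \<union> B) Y = set_act \<phi> A Y \<union> set_act \<phi> B Y"
  unfolding set_act_def by blast

lemma set_act_Int_subset: "set_act \<phi> (A \<inter> B) Y \<subseteq> set_act \<phi> A Y \<inter> set_act \<phi> B Y"
  unfolding set_act_def by blast

lemma set_act_singleton: "set_act \<phi> {g} Y = \<phi> g ` Y"
  unfolding set_act_def by blast

lemma set_act_eq_image: "set_act \<phi> A Y = (\<lambda>(a, y). \<phi> a y) ` (A \<times> Y)"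
  unfolding set_act_def by auto

lemma finite_set_act: "finite A \<Longrightarrow> finite Y \<Longrightarrow> finite (set_act \<phi> A Y)"
  unfolding set_act_eq_image by simp

lemma card_set_act_le: "finite A \<Longrightarrow> finite Y \<Longrightarrow> card (set_act \<phi> A Y) \<le> card A * card Y"
  unfolding set_act_eq_image
  by (rule order_trans[OF card_image_le]) (auto simp: card_cartesian_product)

lemma expansion_inf_mult_card_le:
  assumes "A \<in> nonempty_fin_subsets (carrier G)"
  shows "expansion_inf G \<phi> Y * card A \<le> card (set_act \<phi> A Y)"
proof -
  have "expansion_inf G \<phi> Y \<le> card (set_act \<phi> A Y) / card A"
    unfolding expansion_inf_def
    by (rule cInf_lower) (use assms in \<open>auto intro!: bdd_belowI[where m = 0]\<close>)
  moreover have "0 < card A"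
    using assms by (simp add: card_gt_0_iff)
  ultimately show ?thesis
    by (simp add: le_divide_eq)
qed

lemma l_coset_eq_image: "g <#\<^bsub>G\<^esub> A = (\<otimes>\<^bsub>G\<^esub>) g ` A"
  unfolding l_coset_def by blast

lemma (in group) card_l_coset:
  assumes "g \<in> carrier G" "A \<subseteq> carrier G"
  shows "card (g <# A) = card A"
  unfolding l_coset_eq_image using inj_on_subset[OF inj_on_cmult[OF assms(1)] assms(2)] by (rule card_image)

sublocale group_action \<subseteq> group
  by (rule group_hom.axioms(1)[OF group_hom])

context group_action
begin

lemma set_act_subset: "A \<subseteq> carrier G \<Longrightarrow> Y \<subseteq> E \<Longrightarrow> set_act \<phi> A Y \<subseteq> E"
  unfolding set_act_def using surj_prop by blast

lemma set_act_one:
  assumes "Y \<subseteq> E"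
  shows "set_act \<phi> {\<one>} Y = Y"
proof -
  have "\<phi> \<one> y = y" if "y \<in> E" for y
    using that by (metis id_eq_one restrict_apply')
  with assms show ?thesis
    unfolding set_act_singleton by force
qed

lemma set_act_l_coset:
  assumes "g \<in> carrier G" "A \<subseteq> carrier G" "Y \<subseteq> E"
  shows "set_act \<phi> (g <# A) Y = \<phi> g ` set_act \<phi> A Y"
proof -
  have "set_act \<phi> (g <# A) Y = (\<lambda>(a, y). \<phi> (g \<otimes> a) y) ` (A \<times> Y)"
    unfolding l_coset_eq_image set_act_def by auto
  also have "\<dots> = (\<lambda>(a, y). \<phi> g (\<phi> a y)) ` (A \<times> Y)"
    using assms by (intro image_cong) (auto intro!: composition_rule)
  also have "\<dots> = \<phi> g ` set_act \<phi> A Y"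
    unfolding set_act_eq_image by (simp add: image_image case_prod_beta)
  finally show ?thesis .
qed

lemma card_set_act_l_coset:
  assumes "g \<in> carrier G" "A \<subseteq> carrier G" "Y \<subseteq> E"
  shows "card (set_act \<phi> (g <# A) Y) = card (set_act \<phi> A Y)"
  unfolding set_act_l_coset[OF assms]
  using inj_on_subset[OF inj_prop set_act_subset] assms by (simp add: card_image)

lemma card_le_card_set_act:
  assumes "A \<in> nonempty_fin_subsets (carrier G)" "finite Y" "Y \<subseteq> E"
  shows "card Y \<le> card (set_act \<phi> A Y)"
proof -
  obtain a where a: "a \<in> A"
    using assms(1) by auto
  then have "card Y = card (set_act \<phi> {a} Y)"
    using assms inj_on_subset[OF inj_prop] by (auto simp: set_act_singleton card_image)
  also have "\<dots> \<le> card (set_act \<phi> A Y)"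
    using a assms by (intro card_mono finite_set_act set_act_mono) auto
  finally show ?thesis .
qed

end

locale set_action_defect = group_action +
  fixes Y and lam :: real
  assumes Y_subset: "Y \<subseteq> E" and finite_Y: "finite Y" and lam_pos: "0 < lam"
begin

definition defect :: "'a set \<Rightarrow> real" where
  "defect A = card (set_act \<phi> A Y) - lam * card A"

definition least_minimiser :: "'a set \<Rightarrow> bool" where
  "least_minimiser H \<longleftrightarrow> H \<in> nonempty_fin_subsets (carrier G) \<and>
     (\<forall>A \<in> nonempty_fin_subsets (carrier G).
        defect H \<le> defect A \<and> (defect A = defect H \<longrightarrow> card H \<le> card A))"

lemma defect_submodular:
  assumes "finite A" "finite B"
  shows "defect (A \<union> B) + defect (A \<inter> B) \<le> defect A + defect B"
proof -
  have fin: "finite (set_act \<phi> A Y)" "finite (set_act \<phi> B Y)"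
    using assms finite_Y by (auto intro: finite_set_act)
  have "card (set_act \<phi> (A \<inter> B) Y) \<le> card (set_act \<phi> A Y \<inter> set_act \<phi> B Y)"
    using fin by (intro card_mono set_act_Int_subset) auto
  then have "card (set_act \<phi> (A \<union> B) Y) + card (set_act \<phi> (A \<inter> B) Y)
      \<le> card (set_act \<phi> A Y) + card (set_act \<phi> B Y)"
    using card_Un_Int[OF fin] by (simp add: set_act_Un)
  moreover have "lam * card (A \<union> B) + lam * card (A \<inter> B) = lam * card A + lam * card B"
    using card_Un_Int[OF assms] by (simp flip: distrib_left of_nat_add)
  ultimately show ?thesis
    unfolding defect_def by linarith
qed

lemma defect_l_coset:
  "g \<in> carrier G \<Longrightarrow> A \<subseteq> carrier G \<Longrightarrow> defect (g <# A) = defect A"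
  unfolding defect_def by (simp add: card_set_act_l_coset card_l_coset Y_subset)

lemma finite_defect_image_card_le: "finite (defect ` {A. finite A \<and> card A \<le> n})"
proof (rule finite_subset)
  show "defect ` {A. finite A \<and> card A \<le> n}
      \<subseteq> (\<lambda>(p, q). real p - lam * real q) ` ({..n * card Y} \<times> {..n})"
  proof clarify
    fix A :: "'a set" assume A: "finite A" "card A \<le> n"
    then have "card (set_act \<phi> A Y) \<le> n * card Y"
      using card_set_act_le[OF A(1) finite_Y] by (meson le_trans mult_le_mono1)
    then show "defect A \<in> (\<lambda>(p, q). real p - lam * real q) ` ({..n * card Y} \<times> {..n})"
      using A unfolding defect_def by (intro image_eqI[of _ _ "(card (set_act \<phi> A Y), card A)"]) auto
  qed
qed simp

lemma ex_least_minimiser: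
  fixes mu :: real
  assumes expand: "\<forall>A \<in> nonempty_fin_subsets (carrier G). mu * card A \<le> card (set_act \<phi> A Y)"
    and "lam < mu"
  shows "\<exists>H. least_minimiser H"
proof -
  let ?D = "nonempty_fin_subsets (carrier G)"
  define n where "n = nat \<lceil>defect {\<one>} / (mu - lam)\<rceil>"
  have small: "card A \<le> n" if "A \<in> ?D" "defect A \<le> defect {\<one>}" for A
  proof -
    have "mu * card A \<le> card (set_act \<phi> A Y)"
      using expand that(1) by blast
    then have "(mu - lam) * card A \<le> defect {\<one>}"
      using that(2) unfolding defect_def left_diff_distrib by linarith
    then have "card A \<le> defect {\<one>} / (mu - lam)"
      using \<open>lam < mu\<close> by (simp add: pos_le_divide_eq mult.commute)
    then have "real (card A) \<le> real n"
      unfolding n_def using real_nat_ceiling_ge[of "defect {\<one>} / (mu - lam)"] by linarith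
    then show ?thesis
      by simp
  qed
  have one: "{\<one>} \<in> ?D"
    by simp
  define W where "W = defect ` {A \<in> ?D. defect A \<le> defect {\<one>}}"
  have "finite W"
    unfolding W_def using small
    by (intro finite_subset[OF _ finite_defect_image_card_le[of n]]) auto
  moreover have "W \<noteq> {}"
    unfolding W_def using one by blast
  ultimately have "Min W \<in> W"
    by (rule Min_in)
  then obtain A where A: "A \<in> ?D" "defect A = Min W"
    unfolding W_def by (metis (no_types, lifting) imageE mem_Collect_eq)
  have Min_W_le: "Min W \<le> defect B" if "B \<in> ?D" for B
  proof (cases "defect B \<le> defect {\<one>}")
    case True
    then show ?thesis
      using \<open>finite W\<close> that unfolding W_def by (intro Min_le) auto
  next
    case False
    have "Min W \<le> defect {\<one>}"
      using \<open>finite W\<close> one unfolding W_def by (intro Min_le) auto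
    with False show ?thesis
      by linarith
  qed
  obtain H where H: "H \<in> ?D" "defect H = Min W"
    and least: "\<And>B. B \<in> ?D \<and> defect B = Min W \<Longrightarrow> card H \<le> card B"
    using ex_has_least_nat[where P = "\<lambda>B. B \<in> ?D \<and> defect B = Min W" and m = card] A by blast
  then have "least_minimiser H"
    unfolding least_minimiser_def using Min_W_le least by auto
  then show ?thesis ..
qed

lemma least_minimiser_l_coset:
  assumes H: "least_minimiser H" and g: "g \<in> carrier G"
  shows "least_minimiser (g <# H)"
proof -
  have "H \<in> nonempty_fin_subsets (carrier G)"
    using H unfolding least_minimiser_def by blast
  then have "g <# H \<in> nonempty_fin_subsets (carrier G)"
    using g l_coset_subset_G by (auto simp: l_coset_eq_image)
  moreover have "defect (g <# H) = defect H" "card (g <# H) = card H"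
    using g \<open>H \<in> _\<close> by (simp_all add: defect_l_coset card_l_coset)
  ultimately show ?thesis
    using H unfolding least_minimiser_def by simp
qed

lemma least_minimiser_l_coset_self:
  assumes H: "least_minimiser H" "\<one> \<in> H" and g: "g \<in> H"
  shows "g <# H = H"
proof -
  let ?D = "nonempty_fin_subsets (carrier G)"
  have HD: "H \<in> ?D" and H_le: "\<And>A. A \<in> ?D \<Longrightarrow> defect H \<le> defect A"
    and H_least: "\<And>A. A \<in> ?D \<Longrightarrow> defect A = defect H \<Longrightarrow> card H \<le> card A"
    using H(1) unfolding least_minimiser_def by auto
  have g_carrier: "g \<in> carrier G"
    using HD g by auto
  have gHD: "g <# H \<in> ?D"
    using least_minimiser_l_coset[OF H(1) g_carrier] unfolding least_minimiser_def by blast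
  have defect_gH: "defect (g <# H) = defect H"
    using HD g_carrier by (simp add: defect_l_coset)
  have "g \<in> g <# H"
    using H(2) g_carrier unfolding l_coset_eq_image by (intro image_eqI[where x = \<one>]) simp_all
  then have "H \<inter> (g <# H) \<in> ?D" "H \<union> (g <# H) \<in> ?D"
    using HD gHD g by auto
  moreover have "defect (H \<union> (g <# H)) + defect (H \<inter> (g <# H)) \<le> defect H + defect (g <# H)"
    using HD gHD by (intro defect_submodular) auto
  moreover have "defect H \<le> defect (H \<inter> (g <# H))" "defect H \<le> defect (H \<union> (g <# H))"
    using H_le \<open>H \<inter> (g <# H) \<in> ?D\<close> \<open>H \<union> (g <# H) \<in> ?D\<close> by blast+
  ultimately have "defect (H \<inter> (g <# H)) = defect H"
    using defect_gH by linarith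
  then have "card H \<le> card (H \<inter> (g <# H))"
    using H_least \<open>H \<inter> (g <# H) \<in> ?D\<close> by blast
  then have "H \<inter> (g <# H) = H"
    using HD by (intro card_seteq) auto
  then have "H \<subseteq> g <# H"
    by blast
  moreover have "card (g <# H) \<le> card H"
    using HD g_carrier by (simp add: card_l_coset)
  ultimately show ?thesis
    using gHD card_seteq[of "g <# H" H] by simp
qed

lemma least_minimiser_subgroup:
  assumes H: "least_minimiser H" "\<one> \<in> H"
  shows "subgroup H G"
proof (rule subgroupI)
  show H_carrier: "H \<subseteq> carrier G"
    using H(1) unfolding least_minimiser_def by simp
  show "H \<noteq> {}"
    using H(2) by blast
  show "g \<otimes> h \<in> H" if "g \<in> H" "h \<in> H" for g h
  proof -
    have "g \<otimes> h \<in> g <# H"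
      using that(2) unfolding l_coset_eq_image by (rule imageI)
    then show ?thesis
      using least_minimiser_l_coset_self[OF H that(1)] by simp
  qed
  show "inv g \<in> H" if g: "g \<in> H" for g
  proof -
    have "\<one> \<in> (\<otimes>) g ` H"
      using H(2) least_minimiser_l_coset_self[OF H g] by (simp add: l_coset_eq_image)
    then obtain h where h: "h \<in> H" "g \<otimes> h = \<one>"
      by (metis imageE)
    then have "inv g = h"
      using g H_carrier inv_solve_left[of h g \<one>] by (simp add: subset_iff)
    with h show ?thesis
      by simp
  qed
qed

lemma set_stab_subset_least_minimiser:
  assumes H: "least_minimiser H" "\<one> \<in> H"
  shows "set_stab G \<phi> Y \<subseteq> H"
proof
  fix s assume "s \<in> set_stab G \<phi> Y"
  then have s: "s \<in> carrier G" "set_act \<phi> {s} Y = Y"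
    unfolding set_stab_def by auto
  have HD: "H \<in> nonempty_fin_subsets (carrier G)"
    using H(1) unfolding least_minimiser_def by blast
  have "Y \<subseteq> set_act \<phi> H Y"
    using set_act_mono[of "{\<one>}" H \<phi> Y] H(2) set_act_one[OF Y_subset] by simp
  then have "set_act \<phi> (H \<union> {s}) Y = set_act \<phi> H Y"
    unfolding set_act_Un s(2) by blast
  moreover have "defect H \<le> defect (H \<union> {s})"
    using H(1) HD s(1) unfolding least_minimiser_def by auto
  ultimately have "card (H \<union> {s}) \<le> card H"
    using lam_pos unfolding defect_def by (simp add: mult_le_cancel_left)
  then show "s \<in> H"
    using HD by (simp add: card_insert_if split: if_splits)
qed

lemma least_minimiser_card_bound:
  assumes H: "least_minimiser H" and A: "A \<in> nonempty_fin_subsets (carrier G)"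
  shows "lam * card A + card Y \<le> lam * card H + card (set_act \<phi> A Y)"
proof -
  have "card Y \<le> card (set_act \<phi> H Y)"
    using H finite_Y Y_subset unfolding least_minimiser_def by (intro card_le_card_set_act) auto
  moreover have "defect H \<le> defect A"
    using H A unfolding least_minimiser_def by blast
  ultimately show ?thesis
    unfolding defect_def by linarith
qed

theorem ex_subgroup_card_bound:
  fixes mu :: real
  assumes expand: "\<forall>A \<in> nonempty_fin_subsets (carrier G). mu * card A \<le> card (set_act \<phi> A Y)"
    and "lam < mu"
  shows "\<exists>H. subgroup H G \<and> finite H \<and> set_stab G \<phi> Y \<subseteq> H \<and>
    (\<forall>A \<in> nonempty_fin_subsets (carrier G).
       lam * card A + card Y \<le> lam * card H + card (set_act \<phi> A Y))"
proof -
  obtain H0 where H0: "least_minimiser H0"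
    using ex_least_minimiser[OF assms] by blast
  then obtain a where a: "a \<in> H0" "a \<in> carrier G"
    unfolding least_minimiser_def by auto
  define H where "H = inv a <# H0"
  have H: "least_minimiser H"
    unfolding H_def using H0 a by (simp add: least_minimiser_l_coset)
  have "\<one> \<in> H"
    unfolding H_def l_coset_eq_image using a by (intro image_eqI[where x = a]) simp_all
  moreover have "finite H"
    using H unfolding least_minimiser_def by simp
  ultimately show ?thesis
    using H least_minimiser_card_bound
    by (intro exI[of _ H] conjI least_minimiser_subgroup set_stab_subset_least_minimiser) auto
qed

end

lemma greatest_set_act_preimage:
  fixes mu :: real
  assumes expand: "\<forall>A \<in> nonempty_fin_subsets (carrier G). mu * card A \<le> card (set_act \<phi> A Y)"
    and "0 < mu" "finite Y" and A0: "A0 \<in> nonempty_fin_subsets (carrier G)"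
  defines "As \<equiv> {g \<in> carrier G. \<phi> g ` Y \<subseteq> set_act \<phi> A0 Y}"
  shows "As \<in> nonempty_fin_subsets (carrier G)"
    and "set_act \<phi> As Y = set_act \<phi> A0 Y"
    and "Max {card A | A. A \<subseteq> carrier G \<and> set_act \<phi> A Y = set_act \<phi> A0 Y} = card As"
proof -
  let ?B = "set_act \<phi> A0 Y"
  have "finite ?B"
    using A0 \<open>finite Y\<close> by (simp add: finite_set_act)
  have subset_As: "A \<subseteq> As" if "A \<subseteq> carrier G" "set_act \<phi> A Y \<subseteq> ?B" for A
    using that unfolding As_def set_act_def by blast
  have As_B: "set_act \<phi> As Y \<subseteq> ?B"
    unfolding As_def set_act_def by blast
  have "A0 \<subseteq> As"
    using A0 by (intro subset_As) auto
  have "finite As"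
  proof (rule conjunct1[OF finite_if_finite_subsets_card_bdd])
    fix F assume F: "F \<subseteq> As" "finite F"
    have "mu * card F \<le> card ?B"
    proof (cases "F = {}")
      case False
      then have "F \<in> nonempty_fin_subsets (carrier G)"
        using F unfolding As_def by auto
      then have "mu * card F \<le> card (set_act \<phi> F Y)"
        using expand by blast
      also have "\<dots> \<le> card ?B"
        using set_act_mono[OF F(1), of \<phi> Y] As_B \<open>finite ?B\<close> by (simp add: card_mono)
      finally show ?thesis .
    qed simp
    then have "card F \<le> card ?B / mu"
      using \<open>0 < mu\<close> by (simp add: pos_le_divide_eq mult.commute)
    then have "real (card F) \<le> real (nat \<lceil>card ?B / mu\<rceil>)"
      using real_nat_ceiling_ge[of "card ?B / mu"] by linarith
    then show "card F \<le> nat \<lceil>card ?B / mu\<rceil>"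
      by simp
  qed
  then show "As \<in> nonempty_fin_subsets (carrier G)"
    using \<open>A0 \<subseteq> As\<close> A0 unfolding As_def by auto
  show As_eq: "set_act \<phi> As Y = ?B"
    using As_B set_act_mono[OF \<open>A0 \<subseteq> As\<close>, of \<phi> Y] by (rule antisym)
  show "Max {card A | A. A \<subseteq> carrier G \<and> set_act \<phi> A Y = ?B} = card As"
  proof (rule Max_eqI)
    show card_le: "n \<le> card As" if n: "n \<in> {card A | A. A \<subseteq> carrier G \<and> set_act \<phi> A Y = ?B}" for n
    proof -
      obtain A where A: "A \<subseteq> carrier G" "set_act \<phi> A Y = ?B" "n = card A"
        using n by blast
      then have "A \<subseteq> As"
        by (intro subset_As) auto
      with A(3) show ?thesis
        using card_mono[OF \<open>finite As\<close>] by blast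
    qed
    then have "{card A | A. A \<subseteq> carrier G \<and> set_act \<phi> A Y = ?B} \<subseteq> {..card As}"
      by blast
    then show "finite {card A | A. A \<subseteq> carrier G \<and> set_act \<phi> A Y = ?B}"
      by (rule finite_subset) simp
    have "As \<subseteq> carrier G"
      unfolding As_def by blast
    then show "card As \<in> {card A | A. A \<subseteq> carrier G \<and> set_act \<phi> A Y = ?B}"
      using As_eq by blast
  qed
qed

lemma ex_mult_add_le_of_forall_less:
  fixes S :: "nat set" and N :: nat and a b lam :: real
  assumes "a \<le> b" "0 < lam"
    and below: "\<And>l. 0 < l \<Longrightarrow> l < lam \<Longrightarrow> \<exists>h \<in> S. l * N + a \<le> l * h + b"
  shows "\<exists>h \<in> S. lam * N + a \<le> lam * h + b"
proof (cases "\<exists>h \<in> S. N \<le> h")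
  case True
  then obtain h where "h \<in> S" "N \<le> h"
    by blast
  then have "lam * N \<le> lam * h"
    using \<open>0 < lam\<close> by simp
  with \<open>a \<le> b\<close> have "lam * N + a \<le> lam * h + b"
    by linarith
  with \<open>h \<in> S\<close> show ?thesis
    by blast
next
  case False
  then have "S \<subseteq> {..<N}"
    by auto
  then have "finite S"
    by (rule finite_subset) simp
  moreover have "S \<noteq> {}"
    using below[of "lam / 2"] \<open>0 < lam\<close> by auto
  ultimately have "Max S \<in> S"
    by (rule Max_in)
  then have gap: "0 < real N - Max S"
    using \<open>S \<subseteq> {..<N}\<close> by auto
  have "l \<le> (b - a) / (real N - Max S)" if l: "0 < l" "l < lam" for l
  proof -
    obtain h where "h \<in> S" "l * N + a \<le> l * h + b"
      using below[OF l] by blast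
    moreover have "l * h \<le> l * Max S"
      using Max_ge[OF \<open>finite S\<close> \<open>h \<in> S\<close>] \<open>0 < l\<close> by simp
    ultimately have "l * (real N - Max S) \<le> b - a"
      by (simp add: right_diff_distrib)
    then show ?thesis
      using gap by (simp add: pos_le_divide_eq)
  qed
  then have "lam \<le> (b - a) / (real N - Max S)"
    by (rule dense_le_bounded[OF \<open>0 < lam\<close>])
  then have "lam * N + a \<le> lam * Max S + b"
    using gap by (simp add: pos_le_divide_eq right_diff_distrib)
  with \<open>Max S \<in> S\<close> show ?thesis
    by blast
qed

text \<open>At \<open>lam = mu\<close> the defect need not attain its minimum, so the bound is obtained as a
  limit of the bounds for \<open>l < lam\<close>.\<close>
lemma (in group_action) ex_subgroup_card_bound_le:
  fixes mu lam :: real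
  assumes Y: "Y \<subseteq> E" "finite Y"
    and expand: "\<forall>A \<in> nonempty_fin_subsets (carrier G). mu * card A \<le> card (set_act \<phi> A Y)"
    and lam: "0 < lam" "lam \<le> mu" and A: "A \<in> nonempty_fin_subsets (carrier G)"
  shows "\<exists>H. subgroup H G \<and> finite H \<and> set_stab G \<phi> Y \<subseteq> H \<and>
    lam * card A + card Y \<le> lam * card H + card (set_act \<phi> A Y)"
proof -
  define S where "S = card ` {H. subgroup H G \<and> finite H \<and> set_stab G \<phi> Y \<subseteq> H}"
  have "real (card Y) \<le> card (set_act \<phi> A Y)"
    using A Y by (simp add: card_le_card_set_act)
  moreover have "\<exists>h \<in> S. l * card A + card Y \<le> l * h + card (set_act \<phi> A Y)"
    if l: "0 < l" "l < lam" for l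
  proof -
    interpret set_action_defect G E \<phi> Y l
      using Y l by (intro set_action_defect.intro set_action_defect_axioms.intro group_action_axioms)
    obtain H where "subgroup H G \<and> finite H \<and> set_stab G \<phi> Y \<subseteq> H"
      and "l * card A + card Y \<le> l * card H + card (set_act \<phi> A Y)"
      using ex_subgroup_card_bound[OF expand] l lam A by fastforce
    then show ?thesis
      unfolding S_def by blast
  qed
  ultimately obtain h where "h \<in> S" "lam * card A + card Y \<le> lam * h + card (set_act \<phi> A Y)"
    using ex_mult_add_le_of_forall_less[OF _ \<open>0 < lam\<close>] by blast
  then show ?thesis
    unfolding S_def by blast
qed

theorem mainTheorem9:
  fixes G (structure) and X :: "'x set" and \<phi> :: "'g \<Rightarrow> 'x \<Rightarrow> 'x"
    and Y :: "'x set" and A0 :: "'g set" and lam :: real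
  assumes "group G"
    and "group_action G X \<phi>"
    and "Y \<subseteq> X" and "finite Y"
    and "expansion_inf G \<phi> Y > 0"
    and "0 < lam" and "lam \<le> expansion_inf G \<phi> Y"
    and "A0 \<subseteq> carrier G" and "finite A0" and "A0 \<noteq> {}"
  shows "\<exists>H. subgroup H G \<and> finite H \<and> set_stab G \<phi> Y \<subseteq> H \<and>
     lam * real (Max {card A | A. A \<subseteq> carrier G \<and> set_act \<phi> A Y = set_act \<phi> A0 Y})
       + real (card Y)
     \<le> lam * real (card H) + real (card (set_act \<phi> A0 Y))"
proof -
  interpret group_action G X \<phi>
    by fact
  let ?mu = "expansion_inf G \<phi> Y"
  have expand: "\<forall>A \<in> nonempty_fin_subsets (carrier G). ?mu * card A \<le> card (set_act \<phi> A Y)"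
    using expansion_inf_mult_card_le by blast
  have A0: "A0 \<in> nonempty_fin_subsets (carrier G)"
    using assms by simp
  define As where "As = {g \<in> carrier G. \<phi> g ` Y \<subseteq> set_act \<phi> A0 Y}"
  note As = greatest_set_act_preimage[OF expand assms(5,4) A0, folded As_def]
  show ?thesis
    using ex_subgroup_card_bound_le[OF assms(3,4) expand assms(6,7) As(1)]
    unfolding As(2,3) .
qed

end
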